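(* Let $\Delta$ be a compact convex polygon in a $2$-dimensional real affine space with direction space $V$, and associate to each edge its normal line, a point of $\mathbb P(V^* )\cong\mathbb{RP}^1$. Then $\Delta$ is of rational type if and only if either $\Delta$ has at most $3$ distinct normal lines, or it has at least $4$ distinct normal lines and the cross-ratio of any four distinct ones is rational. In particular a quadrilateral is of rational type iff it has at most three distinct normal lines or the cross-ratio of its four normal lines is rational.
   Context: $\Delta$ is of rational type if there exists a lattice $\Lambda\subset V^*$ such that every edge has a normal vector lying in $\Lambda$. The cross-ratio of four distinct points $P_i=[x_i:y_i]\in\mathbb{RP}^1$ is $\mathbf r(P_1,P_2;P_3,P_4)=\frac{(x_1y_3-y_1x_3)(x_2y_4-y_2x_4)}{(x_1y_4-y_1x_4)(x_2y_3-y_2x_3)}$; whether it is rational does not depend on the ordering. *)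

theory Defs
  imports "HOL-Analysis.Analysis"
begin

text \<open>The 2-dimensional real affine space is modelled as real \<times> real; its
direction space V is again real \<times> real, and V* is identified with
real \<times> real via the standard inner product (u acts as x \<mapsto> u \<bullet> x).\<close>

definition compact_convex_polygon :: "(real \<times> real) set \<Rightarrow> bool" where
  "compact_convex_polygon P \<longleftrightarrow>
     (\<exists>S. finite S \<and> P = convex hull S) \<and> interior P \<noteq> {}"

definition is_edge :: "(real \<times> real) set \<Rightarrow> (real \<times> real) set \<Rightarrow> bool" where
  "is_edge P F \<longleftrightarrow> F face_of P \<and> aff_dim F = 1"

text \<open>Normal line of an edge F: the set of linear functionals (covectors) constant on F;
for an edge this is a 1-dimensional subspace of V*, i.e. a point of P(V*).\<close>
definition normal_line :: "(real \<times> real) set \<Rightarrow> (real \<times> real) set" where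
  "normal_line F = {u. \<forall>x\<in>F. \<forall>y\<in>F. u \<bullet> x = u \<bullet> y}"

definition normal_lines :: "(real \<times> real) set \<Rightarrow> (real \<times> real) set set" where
  "normal_lines P = {normal_line F | F. is_edge P F}"

definition lattice :: "real \<times> real \<Rightarrow> real \<times> real \<Rightarrow> (real \<times> real) set" where
  "lattice a b = {of_int m *\<^sub>R a + of_int n *\<^sub>R b | m n. True}"

definition rational_type :: "(real \<times> real) set \<Rightarrow> bool" where
  "rational_type P \<longleftrightarrow>
     (\<exists>a b. independent {a, b} \<and> a \<noteq> b \<and>
        (\<forall>F. is_edge P F \<longrightarrow> (\<exists>u \<in> lattice a b. u \<noteq> 0 \<and> u \<in> normal_line F)))"

definition det2 :: "real \<times> real \<Rightarrow> real \<times> real \<Rightarrow> real" where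
  "det2 p q = fst p * snd q - snd p * fst q"

text \<open>Cross-ratio of the points [P1],...,[P4] of RP^1 given by representatives.\<close>
definition cross_ratio ::
  "real \<times> real \<Rightarrow> real \<times> real \<Rightarrow> real \<times> real \<Rightarrow> real \<times> real \<Rightarrow> real" where
  "cross_ratio p1 p2 p3 p4 =
     (det2 p1 p3 * det2 p2 p4) / (det2 p1 p4 * det2 p2 p3)"

end

theory Submission imports Defs begin

(*
  Everything here is a statement about a finite family N of
  lines through the origin of the plane, with the polygon entering only through the facts
  that it has finitely many edges and that their normal lines are lines.

  Necessity: nonzero vectors on such lines are real multiples of lattice vectors, the
  cross-ratio is invariant under rescaling its arguments, and the cross-ratio of four lattice
  vectors is a quotient of integer 2x2 determinants, hence rational.

  Sufficiency: any three distinct lines L1, L2, L3 carry an adapted basis a in L1, b in L2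
  with a + b in L3.  If a fourth line L contains u, then the cross-ratio of a, b, a + b, u
  equals -det(b,u)/det(a,u); if it is r/s with integers r, s, the lattice vector r a + s b
  lies on L.  With at most three lines we enlarge the family to three distinct lines (there
  are infinitely many lines); with at least four we pick three of them as base lines.
*)

lemma det2_scaleL: "det2 (c *\<^sub>R u) v = c * det2 u v" by (simp add: det2_def algebra_simps)
lemma det2_scaleR: "det2 u (c *\<^sub>R v) = c * det2 u v" by (simp add: det2_def algebra_simps)
lemma det2_addL: "det2 (u + w) v = det2 u v + det2 w v" by (simp add: det2_def algebra_simps)
lemma det2_addR: "det2 u (v + w) = det2 u v + det2 u w" by (simp add: det2_def algebra_simps)
lemma det2_self: "det2 u u = 0" by (simp add: det2_def)
lemma det2_swap: "det2 u v = - det2 v u" by (simp add: det2_def)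

lemma det2_zero_imp_multiple:
  fixes u w :: "real \<times> real"
  assumes "w \<noteq> 0" "det2 u w = 0"
  shows "\<exists>s. u = s *\<^sub>R w"
proof -
  obtain u1 u2 w1 w2 where uw: "u = (u1, u2)" "w = (w1, w2)" by (cases u, cases w)
  have e: "u1 * w2 = u2 * w1" using assms(2) uw by (simp add: det2_def)
  show ?thesis
  proof (cases "w1 = 0")
    case True
    then have "w2 \<noteq> 0" using assms(1) uw by (auto simp: zero_prod_def)
    then have "u = (u2 / w2) *\<^sub>R w" using e True uw by (auto simp: field_simps)
    thus ?thesis by blast
  next
    case False
    then have "u = (u1 / w1) *\<^sub>R w" using e uw by (auto simp: field_simps)
    thus ?thesis by blast
  qed
qed

text \<open>A pair with nonzero determinant is a basis, in the form used in the definition of rational type.\<close>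
lemma det2_nonzero_independent:
  fixes a b :: "real \<times> real"
  assumes "det2 a b \<noteq> 0"
  shows "independent {a, b} \<and> a \<noteq> b"
proof -
  have "b \<noteq> 0" using assms by (auto simp: det2_def)
  moreover have "a \<notin> span {b}"
  proof
    assume "a \<in> span {b}"
    then obtain k where "a = k *\<^sub>R b" by (auto simp: span_singleton)
    thus False using assms by (simp add: det2_scaleL det2_self)
  qed
  moreover have "a \<noteq> b" using assms by (auto simp: det2_self)
  ultimately show ?thesis by (simp add: independent_insert)
qed

lemma cramer:
  assumes "det2 n1 n2 \<noteq> 0"
  shows "v = (det2 v n2 / det2 n1 n2) *\<^sub>R n1 + (det2 n1 v / det2 n1 n2) *\<^sub>R n2"
proof -
  have e: "det2 n1 n2 *\<^sub>R v = det2 v n2 *\<^sub>R n1 + det2 n1 v *\<^sub>R n2"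
    by (cases n1, cases n2, cases v) (simp add: det2_def prod_eq_iff algebra_simps)
  have "v = (1 / det2 n1 n2) *\<^sub>R (det2 n1 n2 *\<^sub>R v)" using assms by simp
  also have "\<dots> = (det2 v n2 / det2 n1 n2) *\<^sub>R n1 + (det2 n1 v / det2 n1 n2) *\<^sub>R n2"
    unfolding e by (simp add: scaleR_add_right)
  finally show ?thesis .
qed

definition is_line :: "(real \<times> real) set \<Rightarrow> bool" where
  "is_line L \<longleftrightarrow> (\<exists>d::real \<times> real. d \<noteq> 0 \<and> L = {u. u \<bullet> d = 0})"

lemma line_nonzero:
  assumes "is_line L"
  shows "\<exists>u\<in>L. u \<noteq> 0"
proof -
  obtain d where d: "d \<noteq> 0" "L = {u. u \<bullet> d = 0}" using assms is_line_def by auto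
  then have "(- snd d, fst d) \<in> L" "(- snd d, fst d) \<noteq> 0"
    by (auto simp: inner_prod_def prod_eq_iff)
  thus ?thesis by blast
qed

lemma line_scale: "is_line L \<Longrightarrow> u \<in> L \<Longrightarrow> c *\<^sub>R u \<in> L"
  by (auto simp: is_line_def)

lemma line_det_zero:
  assumes "is_line L" "u \<in> L" "v \<in> L"
  shows "det2 u v = 0"
proof -
  obtain d where d: "d \<noteq> 0" "u \<bullet> d = 0" "v \<bullet> d = 0" using assms is_line_def by auto
  have "fst d * det2 u v = snd v * (u \<bullet> d) - snd u * (v \<bullet> d)"
       "snd d * det2 u v = fst u * (v \<bullet> d) - fst v * (u \<bullet> d)"
    by (simp_all add: det2_def inner_prod_def algebra_simps)
  then have "fst d * det2 u v = 0" "snd d * det2 u v = 0" using d by simp_all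
  moreover have "fst d \<noteq> 0 \<or> snd d \<noteq> 0" using d(1) by (simp add: prod_eq_iff)
  ultimately show ?thesis by auto
qed

lemma line_multiple:
  assumes "is_line L" "u \<in> L" "w \<in> L" "w \<noteq> 0"
  shows "\<exists>s. u = s *\<^sub>R w"
  using det2_zero_imp_multiple[OF assms(4) line_det_zero[OF assms(1-3)]] .

lemma line_mem_of_det:
  assumes "is_line L" "w \<in> L" "w \<noteq> 0" "det2 v w = 0"
  shows "v \<in> L"
  using det2_zero_imp_multiple[OF assms(3,4)] line_scale[OF assms(1,2)] by auto

lemma distinct_lines_det:
  assumes L: "is_line L" "u \<in> L" "u \<noteq> 0" and L': "is_line L'" "u' \<in> L'" "u' \<noteq> 0"
    and "L \<noteq> L'"
  shows "det2 u u' \<noteq> 0"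
proof
  assume det: "det2 u u' = 0"
  have "L \<subseteq> L'"
  proof
    fix v assume "v \<in> L"
    then obtain t where "v = t *\<^sub>R u" using line_multiple L by blast
    then show "v \<in> L'" using line_mem_of_det[OF L'] det by (simp add: det2_scaleL)
  qed
  moreover have "L' \<subseteq> L"
  proof
    fix v assume "v \<in> L'"
    then obtain t where "v = t *\<^sub>R u'" using line_multiple L' by blast
    then show "v \<in> L" using line_mem_of_det[OF L] det det2_swap[of u u'] by (simp add: det2_scaleL)
  qed
  ultimately show False using \<open>L \<noteq> L'\<close> by blast
qed

text \<open>There are infinitely many lines: the annihilators of (1, k) for natural k are distinct.\<close>
lemma infinite_lines: "infinite {L. is_line L}"
proof -
  define line :: "nat \<Rightarrow> (real \<times> real) set" where "line k = {u. u \<bullet> (1, real k) = 0}" for k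
  have "inj line"
  proof (rule injI)
    fix k k' assume "line k = line k'"
    moreover have "(- real k, 1) \<in> line k" by (simp add: line_def)
    ultimately show "k = k'" by (simp add: line_def)
  qed
  moreover have "is_line (line k)" for k
    unfolding line_def is_line_def by (rule exI[of _ "(1, real k)"]) (simp add: zero_prod_def)
  then have "range line \<subseteq> {L. is_line L}" by blast
  ultimately show ?thesis using finite_imageD finite_subset by blast
qed

text \<open>The normal line of an edge is a line: it annihilates the direction of the edge.\<close>
lemma edge_normal_line:
  assumes "is_edge P F"
  shows "is_line (normal_line F)"
proof -
  have ad: "aff_dim F = 1" using assms is_edge_def by auto
  then have "collinear F" by (simp add: collinear_aff_dim)
  then obtain d where d: "\<forall>x\<in>F. \<forall>y\<in>F. \<exists>c. x - y = c *\<^sub>R d" by (auto simp: collinear_def)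
  have "aff_dim ({} :: (real \<times> real) set) \<noteq> 1" "aff_dim {p :: real \<times> real} \<noteq> 1" for p by simp_all
  then have "F \<noteq> {}" "\<And>p. F \<noteq> {p}" using ad by metis+
  then obtain p q where pq: "p \<in> F" "q \<in> F" "q \<noteq> p" by blast
  obtain c where c: "q - p = c *\<^sub>R d" using d pq by blast
  have "c \<noteq> 0" "d \<noteq> 0" using c pq(3) by (metis eq_iff_diff_eq_0 scale_eq_0_iff)+
  have "normal_line F = {u. u \<bullet> d = 0}"
  proof (intro set_eqI iffI)
    fix u assume "u \<in> normal_line F"
    then have "u \<bullet> q = u \<bullet> p" using pq unfolding normal_line_def by blast
    then have "c * (u \<bullet> d) = 0" using c by (metis inner_diff_right inner_scaleR_right right_minus_eq)
    thus "u \<in> {u. u \<bullet> d = 0}" using \<open>c \<noteq> 0\<close> by simp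
  next
    fix u assume u: "u \<in> {u. u \<bullet> d = 0}"
    show "u \<in> normal_line F" unfolding normal_line_def
    proof (intro CollectI ballI)
      fix x y assume "x \<in> F" "y \<in> F"
      then obtain e where "x - y = e *\<^sub>R d" using d by blast
      then have "u \<bullet> (x - y) = 0" using u by simp
      thus "u \<bullet> x = u \<bullet> y" by (simp add: inner_diff_right)
    qed
  qed
  thus ?thesis using \<open>d \<noteq> 0\<close> is_line_def by blast
qed

definition rational_line :: "real \<times> real \<Rightarrow> real \<times> real \<Rightarrow> (real \<times> real) set \<Rightarrow> bool" where
  "rational_line a b L \<longleftrightarrow> (\<exists>u\<in>lattice a b. u \<noteq> 0 \<and> u \<in> L)"

lemma lattice_combination: "of_int m *\<^sub>R a + of_int n *\<^sub>R b \<in> lattice a b"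
  unfolding lattice_def by blast

lemma lattice_generators: "a \<in> lattice a b" "b \<in> lattice a b" "a + b \<in> lattice a b"
  using lattice_combination[of 1 a 0 b] lattice_combination[of 0 a 1 b]
    lattice_combination[of 1 a 1 b] by simp_all

lemma det2_lattice:
  "det2 (of_int m *\<^sub>R a + of_int n *\<^sub>R b) (of_int m' *\<^sub>R a + of_int n' *\<^sub>R b)
     = of_int (m * n' - n * m') * det2 a b"
  unfolding det2_def by (simp add: algebra_simps)

text \<open>Hence the cross-ratio of four lattice vectors is a quotient of integers.\<close>
lemma cross_ratio_lattice:
  assumes "w1 \<in> lattice a b" "w2 \<in> lattice a b" "w3 \<in> lattice a b" "w4 \<in> lattice a b"
  shows "cross_ratio w1 w2 w3 w4 \<in> \<rat>"
proof -
  obtain m1 n1 m2 n2 m3 n3 m4 n4 where w: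
    "w1 = of_int m1 *\<^sub>R a + of_int n1 *\<^sub>R b" "w2 = of_int m2 *\<^sub>R a + of_int n2 *\<^sub>R b"
    "w3 = of_int m3 *\<^sub>R a + of_int n3 *\<^sub>R b" "w4 = of_int m4 *\<^sub>R a + of_int n4 *\<^sub>R b"
    using assms unfolding lattice_def by blast
  define D where "D = det2 a b"
  define A where "A = (m1 * n3 - n1 * m3) * (m2 * n4 - n2 * m4)"
  define B where "B = (m1 * n4 - n1 * m4) * (m2 * n3 - n2 * m3)"
  have "cross_ratio w1 w2 w3 w4 = (D * D * of_int A) / (D * D * of_int B)"
    unfolding cross_ratio_def w det2_lattice A_def B_def D_def by (simp add: algebra_simps)
  also have "\<dots> = (if D = 0 then 0 else of_int A / of_int B)" by simp
  finally show ?thesis by simp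
qed

lemma cross_ratio_scale:
  assumes "s1 \<noteq> 0" "s2 \<noteq> 0" "s3 \<noteq> 0" "s4 \<noteq> 0"
  shows "cross_ratio (s1 *\<^sub>R w1) (s2 *\<^sub>R w2) (s3 *\<^sub>R w3) (s4 *\<^sub>R w4) = cross_ratio w1 w2 w3 w4"
proof -
  have "cross_ratio (s1 *\<^sub>R w1) (s2 *\<^sub>R w2) (s3 *\<^sub>R w3) (s4 *\<^sub>R w4)
     = ((s1 * s2 * s3 * s4) * (det2 w1 w3 * det2 w2 w4)) / ((s1 * s2 * s3 * s4) * (det2 w1 w4 * det2 w2 w3))"
    unfolding cross_ratio_def det2_scaleL det2_scaleR by (simp add: algebra_simps)
  also have "\<dots> = cross_ratio w1 w2 w3 w4"
    using assms unfolding cross_ratio_def by (simp add: mult_divide_mult_cancel_left)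
  finally show ?thesis .
qed

lemma rational_line_multiple:
  assumes "is_line L" "rational_line a b L" "u \<in> L"
  obtains s w where "w \<in> lattice a b" "u = s *\<^sub>R w"
proof -
  obtain w where w: "w \<in> lattice a b" "w \<noteq> 0" "w \<in> L"
    using assms(2) unfolding rational_line_def by blast
  obtain s where "u = s *\<^sub>R w" using line_multiple assms(1,3) w(2,3) by blast
  with w(1) show ?thesis using that by blast
qed

lemma cross_ratio_rational_lines:
  assumes "is_line L1" "rational_line a b L1" "u1 \<in> L1" "u1 \<noteq> 0"
    and "is_line L2" "rational_line a b L2" "u2 \<in> L2" "u2 \<noteq> 0"
    and "is_line L3" "rational_line a b L3" "u3 \<in> L3" "u3 \<noteq> 0"
    and "is_line L4" "rational_line a b L4" "u4 \<in> L4" "u4 \<noteq> 0"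
  shows "cross_ratio u1 u2 u3 u4 \<in> \<rat>"
proof -
  obtain s1 w1 where w1: "w1 \<in> lattice a b" "u1 = s1 *\<^sub>R w1"
    using rational_line_multiple[OF assms(1-3)] .
  obtain s2 w2 where w2: "w2 \<in> lattice a b" "u2 = s2 *\<^sub>R w2"
    using rational_line_multiple[OF assms(5-7)] .
  obtain s3 w3 where w3: "w3 \<in> lattice a b" "u3 = s3 *\<^sub>R w3"
    using rational_line_multiple[OF assms(9-11)] .
  obtain s4 w4 where w4: "w4 \<in> lattice a b" "u4 = s4 *\<^sub>R w4"
    using rational_line_multiple[OF assms(13-15)] .
  have "s1 \<noteq> 0" "s2 \<noteq> 0" "s3 \<noteq> 0" "s4 \<noteq> 0" using assms w1 w2 w3 w4 by auto
  then have "cross_ratio u1 u2 u3 u4 = cross_ratio w1 w2 w3 w4"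
    unfolding w1(2) w2(2) w3(2) w4(2) by (rule cross_ratio_scale)
  then show ?thesis using cross_ratio_lattice[OF w1(1) w2(1) w3(1) w4(1)] by simp
qed

text \<open>Sufficiency for one more line: relative to the points a, b, a + b, the cross-ratio is an
  affine coordinate on the projective line, so a rational value gives a lattice point on L.\<close>
lemma rational_line_of_cross_ratio:
  assumes D: "det2 a b \<noteq> 0" and L: "is_line L" "u \<in> L" "u \<noteq> 0"
    and cr: "cross_ratio a b (a + b) u \<in> \<rat>"
  shows "rational_line a b L"
proof (cases "det2 a u = 0")
  case True
  then have "a \<in> L" using line_mem_of_det L by blast
  moreover have "a \<noteq> 0" using D by (auto simp: det2_def)
  ultimately show ?thesis using lattice_generators unfolding rational_line_def by blast
next
  case False
  have "cross_ratio a b (a + b) u = - det2 b u / det2 a u"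
    using D False unfolding cross_ratio_def
    by (simp add: det2_addR det2_self det2_swap[of b a] field_simps)
  with cr obtain r s :: int where rs: "s > 0" "- det2 b u / det2 a u = of_int r / of_int s"
    by (metis Rats_cases')
  define w where "w = of_int r *\<^sub>R a + of_int s *\<^sub>R b"
  have "det2 w u = of_int r * det2 a u + of_int s * det2 b u"
    unfolding w_def by (simp add: det2_addL det2_scaleL)
  also have "\<dots> = 0" using rs False by (simp add: field_simps)
  finally have "w \<in> L" using line_mem_of_det L by blast
  moreover have "det2 a w = of_int s * det2 a b"
    unfolding w_def by (simp add: det2_addR det2_scaleR det2_self)
  then have "w \<noteq> 0" using D rs(1) by (auto simp: det2_def)
  ultimately show ?thesis using lattice_combination w_def unfolding rational_line_def by blast
qed

text \<open>Three distinct lines carry a basis a \<in> L1, b \<in> L2 with a + b \<in> L3: rescale nonzero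
  n1 \<in> L1, n2 \<in> L2 by the Cramer coordinates of a nonzero n3 \<in> L3.\<close>
lemma adapted_basis:
  assumes lines: "is_line L1" "is_line L2" "is_line L3"
    and pairwise: "L1 \<noteq> L2" "L1 \<noteq> L3" "L2 \<noteq> L3"
  obtains a b where "det2 a b \<noteq> 0" "a \<in> L1" "b \<in> L2" "a + b \<in> L3"
proof -
  obtain n1 n2 n3 where n: "n1 \<in> L1" "n1 \<noteq> 0" "n2 \<in> L2" "n2 \<noteq> 0" "n3 \<in> L3" "n3 \<noteq> 0"
    using line_nonzero lines by metis
  have D12: "det2 n1 n2 \<noteq> 0" and D32: "det2 n3 n2 \<noteq> 0" and D13: "det2 n1 n3 \<noteq> 0"
    using distinct_lines_det lines pairwise n by metis+
  define a where "a = (det2 n3 n2 / det2 n1 n2) *\<^sub>R n1"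
  define b where "b = (det2 n1 n3 / det2 n1 n2) *\<^sub>R n2"
  have "a + b = n3" using cramer[OF D12, of n3] unfolding a_def b_def by simp
  moreover have "det2 a b \<noteq> 0"
    using D12 D32 D13 unfolding a_def b_def by (simp add: det2_scaleL det2_scaleR)
  moreover have "a \<in> L1" "b \<in> L2" unfolding a_def b_def using line_scale lines n by auto
  ultimately show ?thesis using that n by auto
qed

definition cross_ratios_rational :: "(real \<times> real) set set \<Rightarrow> bool" where
  "cross_ratios_rational N \<longleftrightarrow>
     (\<forall>L1 L2 L3 L4 u1 u2 u3 u4.
        L1 \<in> N \<and> L2 \<in> N \<and> L3 \<in> N \<and> L4 \<in> N \<and> distinct [L1, L2, L3, L4] \<and>
        u1 \<in> L1 \<and> u2 \<in> L2 \<and> u3 \<in> L3 \<and> u4 \<in> L4 \<and>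
        u1 \<noteq> 0 \<and> u2 \<noteq> 0 \<and> u3 \<noteq> 0 \<and> u4 \<noteq> 0 \<longrightarrow>
        cross_ratio u1 u2 u3 u4 \<in> \<rat>)"

lemma lattice_family_cross_ratios:
  assumes "\<forall>L\<in>N. is_line L \<and> rational_line a b L"
  shows "cross_ratios_rational N"
  unfolding cross_ratios_rational_def using assms by (blast intro: cross_ratio_rational_lines)

text \<open>Three distinct lines which either contain the whole family (if it has at most three
  members, using that there are infinitely many lines) or belong to it.\<close>
lemma three_base_lines:
  assumes fin: "finite N" and lines: "\<forall>L\<in>N. is_line L"
  obtains L1 L2 L3 where "is_line L1" "is_line L2" "is_line L3"
    "L1 \<noteq> L2" "L1 \<noteq> L3" "L2 \<noteq> L3" "N \<subseteq> {L1, L2, L3} \<or> {L1, L2, L3} \<subseteq> N"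
proof -
  have "\<exists>T. card T = 3 \<and> T \<subseteq> {L. is_line L} \<and> (N \<subseteq> T \<or> T \<subseteq> N)"
  proof (cases "card N \<le> 3")
    case True
    have "infinite ({L. is_line L} - N)" using infinite_lines fin by simp
    then obtain B where B: "finite B" "card B = 3 - card N" "B \<subseteq> {L. is_line L} - N"
      using infinite_arbitrarily_large by blast
    then have "N \<inter> B = {}" by blast
    then have "card (N \<union> B) = 3" using card_Un_disjoint[OF fin B(1)] B(2) True by simp
    moreover have "N \<union> B \<subseteq> {L. is_line L}" using B(3) lines by blast
    ultimately show ?thesis by (intro exI[of _ "N \<union> B"]) blast
  next
    case False
    then have "3 \<le> card N" by simp
    then obtain T where "T \<subseteq> N" "card T = 3" "finite T" by (rule obtain_subset_with_card_n)
    moreover have "T \<subseteq> {L. is_line L}" using \<open>T \<subseteq> N\<close> lines by blast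
    ultimately show ?thesis by blast
  qed
  then obtain T where T: "card T = 3" "T \<subseteq> {L. is_line L}" "N \<subseteq> T \<or> T \<subseteq> N" by blast
  from T(1) obtain L1 L2 L3 where T_eq: "T = {L1, L2, L3}" and "L1 \<noteq> L2" "L2 \<noteq> L3" "L1 \<noteq> L3"
    unfolding card_3_iff by blast
  moreover have "is_line L1" "is_line L2" "is_line L3" using T(2) unfolding T_eq by simp_all
  moreover have "N \<subseteq> {L1, L2, L3} \<or> {L1, L2, L3} \<subseteq> N" using T(3) unfolding T_eq .
  ultimately show ?thesis using that by blast
qed

text \<open>Sufficiency: a family of lines, with rational cross-ratios when it has four or more
  members, is rational for a suitable lattice; the lattice comes from an adapted basis.\<close>
lemma family_lattice_of_cross_ratios:
  assumes fin: "finite N" and lines: "\<forall>L\<in>N. is_line L"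
    and cr: "4 \<le> card N \<Longrightarrow> cross_ratios_rational N"
  obtains a b where "det2 a b \<noteq> 0" "\<forall>L\<in>N. rational_line a b L"
proof -
  obtain L1 L2 L3 where base: "is_line L1" "is_line L2" "is_line L3"
    "L1 \<noteq> L2" "L1 \<noteq> L3" "L2 \<noteq> L3" and cover: "N \<subseteq> {L1, L2, L3} \<or> {L1, L2, L3} \<subseteq> N"
    by (rule three_base_lines[OF fin lines])
  obtain a b where ab: "det2 a b \<noteq> 0" "a \<in> L1" "b \<in> L2" "a + b \<in> L3"
    by (rule adapted_basis[OF base])
  have nonzero: "a \<noteq> 0" "b \<noteq> 0" "a + b \<noteq> 0"
  proof -
    show "a \<noteq> 0" "b \<noteq> 0" using ab(1) by (auto simp: det2_def)
    have "det2 a (a + b) \<noteq> 0" using ab(1) by (simp add: det2_addR det2_self)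
    moreover have "det2 a 0 = 0" by (simp add: det2_def)
    ultimately show "a + b \<noteq> 0" by metis
  qed
  have "rational_line a b L" if L: "L \<in> N" for L
  proof (cases "L \<in> {L1, L2, L3}")
    case True
    then show ?thesis
      using ab nonzero lattice_generators unfolding rational_line_def by blast
  next
    case False
    with cover L have sub: "insert L {L1, L2, L3} \<subseteq> N" by blast
    have "distinct [L1, L2, L3, L]" using False base(4-6) by auto
    then have "card (insert L {L1, L2, L3}) = 4" by (auto simp: card_insert_if)
    then have "4 \<le> card N" using card_mono[OF fin sub] by simp
    moreover obtain u where u: "u \<in> L" "u \<noteq> 0" using line_nonzero lines L by blast
    moreover note \<open>distinct [L1, L2, L3, L]\<close>
    ultimately have "cross_ratio a b (a + b) u \<in> \<rat>"
      using cr[unfolded cross_ratios_rational_def, rule_format, of L1 L2 L3 L a b "a + b" u]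
        sub ab nonzero by simp
    then show ?thesis using rational_line_of_cross_ratio ab(1) lines L u by blast
  qed
  then show ?thesis using that ab(1) by blast
qed

lemma normal_lines_image: "normal_lines P = normal_line ` {F. is_edge P F}"
  unfolding normal_lines_def by blast

lemma rational_type_iff:
  "rational_type P \<longleftrightarrow>
     (\<exists>a b. independent {a, b} \<and> a \<noteq> b \<and> (\<forall>L\<in>normal_lines P. rational_line a b L))"
  unfolding rational_type_def normal_lines_image rational_line_def by simp

lemma finite_normal_lines:
  assumes "compact_convex_polygon P"
  shows "finite (normal_lines P)"
proof -
  have "polytope P" using assms unfolding compact_convex_polygon_def polytope_def by blast
  then have "finite {F. F face_of P}" by (rule finite_polytope_faces)
  then have "finite {F. is_edge P F}" unfolding is_edge_def by (rule rev_finite_subset) blast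
  then show ?thesis unfolding normal_lines_image by simp
qed

theorem mainTheorem13:
  fixes P :: "(real \<times> real) set"
  assumes "compact_convex_polygon P"
  shows "rational_type P \<longleftrightarrow>
           (card (normal_lines P) \<le> 3 \<or>
            (card (normal_lines P) \<ge> 4 \<and>
             (\<forall>L1 L2 L3 L4 u1 u2 u3 u4.
                L1 \<in> normal_lines P \<and> L2 \<in> normal_lines P \<and>
                L3 \<in> normal_lines P \<and> L4 \<in> normal_lines P \<and>
                distinct [L1, L2, L3, L4] \<and>
                u1 \<in> L1 \<and> u2 \<in> L2 \<and> u3 \<in> L3 \<and> u4 \<in> L4 \<and>
                u1 \<noteq> 0 \<and> u2 \<noteq> 0 \<and> u3 \<noteq> 0 \<and> u4 \<noteq> 0 \<longrightarrow>
                cross_ratio u1 u2 u3 u4 \<in> \<rat>)))"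
proof -
  let ?N = "normal_lines P"
  have fin: "finite ?N" using finite_normal_lines[OF assms] .
  have lines: "\<forall>L\<in>?N. is_line L" unfolding normal_lines_image using edge_normal_line by blast
  have "rational_type P \<longleftrightarrow> card ?N \<le> 3 \<or> (card ?N \<ge> 4 \<and> cross_ratios_rational ?N)"
  proof
    assume "rational_type P"
    then obtain a b where "\<forall>L\<in>?N. rational_line a b L" unfolding rational_type_iff by blast
    then have "cross_ratios_rational ?N" using lines lattice_family_cross_ratios by blast
    then show "card ?N \<le> 3 \<or> (card ?N \<ge> 4 \<and> cross_ratios_rational ?N)" by linarith
  next
    assume "card ?N \<le> 3 \<or> (card ?N \<ge> 4 \<and> cross_ratios_rational ?N)"
    then have cr: "4 \<le> card ?N \<Longrightarrow> cross_ratios_rational ?N" by linarith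
    obtain a b where "det2 a b \<noteq> 0" "\<forall>L\<in>?N. rational_line a b L"
      by (rule family_lattice_of_cross_ratios[OF fin lines cr])
    then show "rational_type P" unfolding rational_type_iff using det2_nonzero_independent by blast
  qed
  then show ?thesis unfolding cross_ratios_rational_def .
qed

end
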